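(* Let $F$ be a probability distribution on the non-negative integers. In the Coin Toss (CT) model with degree distribution $F$, the total length $T$ of all edges at the origin satisfies $\mathbb{E}[T]<\infty$ if and only if $F$ has bounded support.
   Context: CT model: independently for each $i\in\mathbb{Z}$ let $D_i\sim F$, and attach $D_i$ stubs $s_{i,1},\dots,s_{i,D_i}$ to vertex $i$. For $j\ge1$ let $\Gamma_j=\{i\in\mathbb{Z}:D_i\ge j\}$; the stubs $s_{i,j}$, $i\in\Gamma_j$, form level $j$. For each level $j$ separately (with independent fair coin tosses, independent of the degrees) the level-$j$ stubs are given directions so that along $\Gamma_j$ (in increasing order) the directions alternate right, left, right, left, \dots, the direction of the stub at the first vertex $i\ge 0$ of $\Gamma_j$ being right or left according to a fair coin. A level-$j$ stub at $i$ pointing right (left) is joined to the level-$j$ stub at the $(2j-1)$-th vertex of $\Gamma_j$ to the right (left) of $i$, producing an edge. The length of an edge $\{i,k\}$ is $|i-k|$, and $T$ is the total length of all edges at vertex $0$. *)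

theory Defs
  imports "HOL-Probability.Probability"
begin

text \<open>A configuration is a pair (D, C): the degrees
D :: int \<Rightarrow> nat and the coin tosses C :: nat \<Rightarrow> bool, where C j = True means
that at level j the stub at the first vertex i \<ge> 0 of Gamma_j points right
(C 0 is unused).\<close>

definition Gamma :: "(int \<Rightarrow> nat) \<Rightarrow> nat \<Rightarrow> int set" where
  "Gamma D j = {i. D i \<ge> j}"

definition kth_right :: "int set \<Rightarrow> int \<Rightarrow> nat \<Rightarrow> int option" where
  "kth_right S i k =
     (if \<exists>x. x \<in> S \<and> i < x \<and> card {y \<in> S. i < y \<and> y < x} = k - 1
      then Some (THE x. x \<in> S \<and> i < x \<and> card {y \<in> S. i < y \<and> y < x} = k - 1)
      else None)"

definition kth_left :: "int set \<Rightarrow> int \<Rightarrow> nat \<Rightarrow> int option" where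
  "kth_left S i k =
     (if \<exists>x. x \<in> S \<and> x < i \<and> card {y \<in> S. x < y \<and> y < i} = k - 1
      then Some (THE x. x \<in> S \<and> x < i \<and> card {y \<in> S. x < y \<and> y < i} = k - 1)
      else None)"

definition first_nonneg :: "int set \<Rightarrow> int" where
  "first_nonneg S = (LEAST x. x \<in> S \<and> 0 \<le> x)"

text \<open>Direction of the level-j stub at vertex i \<in> Gamma_j: directions alternate
along Gamma_j, the stub at the first vertex \<ge> 0 pointing right iff C j.\<close>
definition points_right :: "(int \<Rightarrow> nat) \<Rightarrow> (nat \<Rightarrow> bool) \<Rightarrow> nat \<Rightarrow> int \<Rightarrow> bool" where
  "points_right D C j i =
     (let G = Gamma D j; f = first_nonneg G;
          n = (if f \<le> i then card {y \<in> G. f \<le> y \<and> y < i}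
               else card {y \<in> G. i \<le> y \<and> y < f})
      in (C j \<longleftrightarrow> even n))"

definition partner :: "(int \<Rightarrow> nat) \<Rightarrow> (nat \<Rightarrow> bool) \<Rightarrow> nat \<Rightarrow> int \<Rightarrow> int option" where
  "partner D C j i =
     (if points_right D C j i then kth_right (Gamma D j) i (2 * j - 1)
      else kth_left (Gamma D j) i (2 * j - 1))"

text \<open>Length of the edge containing stub s_{i,j}; \<infinity> if the edge does not exist
(this happens only on a null set).\<close>
definition stub_edge_length :: "(int \<Rightarrow> nat) \<Rightarrow> (nat \<Rightarrow> bool) \<Rightarrow> nat \<Rightarrow> int \<Rightarrow> ennreal" where
  "stub_edge_length D C j i =
     (case partner D C j i of None \<Rightarrow> \<infinity> | Some k \<Rightarrow> ennreal (real_of_int \<bar>i - k\<bar>))"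

text \<open>Total length of all edges at vertex 0: each edge at 0 contains exactly one
of the stubs s_{0,1}, ..., s_{0,D_0} (no loops), so sum over these stubs.\<close>
definition CT_T :: "(int \<Rightarrow> nat) \<times> (nat \<Rightarrow> bool) \<Rightarrow> ennreal" where
  "CT_T \<omega> = (\<Sum>j\<in>{1..fst \<omega> 0}. stub_edge_length (fst \<omega>) (snd \<omega>) j 0)"

definition CT_space :: "nat pmf \<Rightarrow> ((int \<Rightarrow> nat) \<times> (nat \<Rightarrow> bool)) measure" where
  "CT_space F = (\<Pi>\<^sub>M i\<in>(UNIV::int set). measure_pmf F) \<Otimes>\<^sub>M
                (\<Pi>\<^sub>M j\<in>(UNIV::nat set). measure_pmf (bernoulli_pmf (1/2)))"

end

theory Submission
  imports Defs
begin

(* At the origin the level-j stub is joined to the (2j-1)-th point of Gamma_j on its side, and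
   Gamma_j is an i.i.d. thinning of the integers with density p_j = P(D >= j).

   If F is bounded by K, only the levels j <= K occur, all with p_j > 0 for the least such K.
   The distance to the m-th point of Gamma_j is at most m times the number of lengths q for which
   one of the first m blocks of length q beside the origin misses Gamma_j; such a block is missed
   with probability (1 - p_j)^q, so a geometric series bounds the expectation.

   If F is unbounded, p_j > 0 for all j. With probability p_j / 2 the level-j stub at the origin
   exists and points right, and then its length is at least the gap to the first point of Gamma_j
   on the right, whose expected size is 1 / p_j. Every level thus contributes at least 1/2. *)

lemma ennreal_eq_top_if_of_nat_le:
  assumes "\<And>n. of_nat n \<le> (x::ennreal)"
  shows "x = \<top>"
  using SUP_least[of UNIV of_nat x] assms by (simp add: ennreal_SUP_of_nat_eq_top top_unique)

lemma ennreal_half: "ennreal (1/2) = 1/2"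
  by (metis ennreal_1 ennreal_divide_numeral zero_le_one)

lemma prob_atLeast_eq_1_minus_prob_lessThan:
  fixes M :: "'a::linorder pmf"
  shows "measure_pmf.prob M {j..} = 1 - measure_pmf.prob M {..<j}"
  using measure_pmf.prob_compl[of "{j..}" M] by (simp add: Compl_eq_Diff_UNIV[symmetric] Compl_atLeast)

section \<open>Order statistics of sets of integers\<close>

lemma card_between_less:
  fixes S :: "int set"
  assumes "a \<in> S" "i < a" "a < b"
  shows "card {y \<in> S. i < y \<and> y < a} < card {y \<in> S. i < y \<and> y < b}"
proof (rule psubset_card_mono)
  show "finite {y \<in> S. i < y \<and> y < b}"
    by (rule finite_subset[of _ "{i<..<b}"]) auto
  show "{y \<in> S. i < y \<and> y < a} \<subset> {y \<in> S. i < y \<and> y < b}"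
    using assms by auto
qed

lemma kth_right_eq_Some_iff:
  "kth_right S i k = Some x \<longleftrightarrow> x \<in> S \<and> i < x \<and> card {y \<in> S. i < y \<and> y < x} = k - 1"
proof -
  let ?P = "\<lambda>x. x \<in> S \<and> i < x \<and> card {y \<in> S. i < y \<and> y < x} = k - 1"
  have unique: "x = z" if "?P x" "?P z" for x z
  proof (cases x z rule: linorder_cases)
    case less
    then show ?thesis using that card_between_less[of x S i z] by simp
  next
    case greater
    then show ?thesis using that card_between_less[of z S i x] by simp
  qed simp
  have "?P (THE x. ?P x)" if "?P x0" for x0
    using that by (rule theI) (use that unique in blast)
  moreover have "(THE x. ?P x) = x" if "?P x"
    using that unique by blast
  ultimately show ?thesis
    unfolding kth_right_def by auto
qed

lemma kth_left_eq_map_kth_right: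
  "kth_left S i k = map_option uminus (kth_right (uminus ` S) (- i) k)"
proof -
  have card_mirror: "card {y \<in> uminus ` S. - i < y \<and> y < - x} = card {y \<in> S. x < y \<and> y < i}" for x
  proof -
    have "{y \<in> uminus ` S. - i < y \<and> y < - x} = uminus ` {y \<in> S. x < y \<and> y < i}"
      by force
    then show ?thesis
      by (simp add: card_image)
  qed
  let ?P = "\<lambda>x. x \<in> S \<and> x < i \<and> card {y \<in> S. x < y \<and> y < i} = k - 1"
  have P_iff: "?P x \<longleftrightarrow> kth_right (uminus ` S) (- i) k = Some (- x)" for x
    unfolding kth_right_eq_Some_iff card_mirror by auto
  show ?thesis
  proof (cases "kth_right (uminus ` S) (- i) k")
    case None
    then show ?thesis
      using P_iff unfolding kth_left_def by auto
  next
    case (Some z)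
    then have "?P (- z)"
      using P_iff[of "- z"] by simp
    moreover have "(THE x. ?P x) = - z"
      using P_iff Some \<open>?P (- z)\<close> by (intro the_equality) auto
    ultimately show ?thesis
      using Some unfolding kth_left_def by auto
  qed
qed

lemma exists_card_less_eq:
  fixes A :: "'a::linorder set"
  assumes "finite A" "m < card A"
  shows "\<exists>x\<in>A. card {y \<in> A. y < x} = m"
proof -
  define rank where "rank x = card {y \<in> A. y < x}" for x
  have rank_less: "rank x < rank z" if "x \<in> A" "x < z" for x z
    unfolding rank_def using that assms(1) by (intro psubset_card_mono) auto
  have "inj_on rank A"
    using rank_less by (intro strict_mono_on_imp_inj_on strict_mono_onI)
  moreover have "rank ` A \<subseteq> {..<card A}"
    unfolding rank_def using assms(1) by (auto intro!: psubset_card_mono)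
  ultimately have "rank ` A = {..<card A}"
    by (intro card_subset_eq) (simp_all add: card_image)
  then have "m \<in> rank ` A"
    using assms(2) by simp
  then show ?thesis
    unfolding rank_def by blast
qed

definition misses_block :: "int set \<Rightarrow> nat \<Rightarrow> nat \<Rightarrow> bool" where
  "misses_block S q r \<longleftrightarrow> (\<forall>k\<in>{r*q+1..r*q+q}. int k \<notin> S)"

lemma kth_right_0_le_if_meets_blocks:
  fixes S :: "int set"
  assumes m: "1 \<le> m" and hits: "\<forall>r<m. \<not> misses_block S q r"
  shows "\<exists>x. kth_right S 0 m = Some x \<and> x \<le> int (q*m)"
proof -
  obtain e where e: "\<And>r. r < m \<Longrightarrow> e r \<in> {r*q+1..r*q+q} \<and> int (e r) \<in> S"
    using hits unfolding misses_block_def by metis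
  have block_index: "(e r - 1) div q = r" if "r < m" for r
    using e[OF that] by (intro div_nat_eqI) (auto simp: algebra_simps)
  have e_le: "e r \<le> q*m" if "r < m" for r
  proof -
    have "r*q + q \<le> m*q"
      using that mult_le_mono1[of "Suc r" m q] by simp
    then show ?thesis
      using e[OF that] by (simp add: mult.commute)
  qed
  define A where "A = S \<inter> {1..int (q*m)}"
  have "finite A"
    unfolding A_def by simp
  have inj: "inj_on (\<lambda>r. int (e r)) {..<m}"
    by (rule inj_on_inverseI[where g = "\<lambda>k. (nat k - 1) div q"]) (use block_index in auto)
  have sub: "(\<lambda>r. int (e r)) ` {..<m} \<subseteq> A"
  proof (rule image_subsetI)
    fix r assume "r \<in> {..<m}"
    then have "1 \<le> e r" "e r \<le> q*m" "int (e r) \<in> S"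
      using e[of r] e_le[of r] by auto
    then show "int (e r) \<in> A"
      unfolding A_def by (simp del: of_nat_mult)
  qed
  have "m \<le> card A"
    using card_mono[OF \<open>finite A\<close> sub] by (simp add: card_image[OF inj])
  then have "m - 1 < card A"
    using m by linarith
  then obtain x where x: "x \<in> A" "card {y \<in> A. y < x} = m - 1"
    using exists_card_less_eq[OF \<open>finite A\<close>] by blast
  have "{y \<in> A. y < x} = {y \<in> S. 0 < y \<and> y < x}"
    using x(1) unfolding A_def by auto
  then have "kth_right S 0 m = Some x"
    using x unfolding kth_right_eq_Some_iff A_def by auto
  then show ?thesis
    using x(1) unfolding A_def by auto
qed

definition dist_kth_right :: "int set \<Rightarrow> nat \<Rightarrow> ennreal" where
  "dist_kth_right S m = (case kth_right S 0 m of None \<Rightarrow> \<infinity> | Some x \<Rightarrow> ennreal (real_of_int \<bar>x\<bar>))"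

definition missed_block_count :: "int set \<Rightarrow> nat \<Rightarrow> ennreal" where
  "missed_block_count S m = (\<Sum>q. of_nat m * (\<Sum>r<m. if misses_block S q r then 1 else 0))"

lemma of_nat_le_missed_block_count:
  assumes "\<forall>q<c. \<exists>r<m. misses_block S q r"
  shows "of_nat (c*m) \<le> missed_block_count S m"
proof -
  have "of_nat m \<le> of_nat m * (\<Sum>r<m. if misses_block S q r then 1 else 0 :: ennreal)" if "q < c" for q
  proof -
    obtain r where "r < m" "misses_block S q r"
      using assms \<open>q < c\<close> by blast
    then have one_le: "(1::ennreal) \<le> (\<Sum>r<m. if misses_block S q r then 1 else 0)"
      using member_le_sum[of r "{..<m}" "\<lambda>r. if misses_block S q r then 1 else 0 :: ennreal"] by simp
    show ?thesis
      using mult_left_mono[OF one_le, of "of_nat m"] by simp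
  qed
  then have "of_nat (c*m) \<le> (\<Sum>q<c. of_nat m * (\<Sum>r<m. if misses_block S q r then 1 else 0 :: ennreal))"
    using sum_mono[of "{..<c}" "\<lambda>_. of_nat m :: ennreal"] by simp
  also have "\<dots> \<le> missed_block_count S m"
    unfolding missed_block_count_def by (rule sum_le_suminf) auto
  finally show ?thesis .
qed

(* If each of the first m blocks of length q to the right of 0 meets S, the m-th point of S lies
   within q * m; hence each q < d / m, with d the distance to that point, has a missed block. *)
lemma dist_kth_right_le_missed_block_count:
  assumes m: "1 \<le> m"
  shows "dist_kth_right S m \<le> missed_block_count S m"
proof (cases "kth_right S 0 m")
  case None
  then have "\<forall>q<c. \<exists>r<m. misses_block S q r" for c
    using kth_right_0_le_if_meets_blocks[OF m, of S] by force
  then have "of_nat (c*m) \<le> missed_block_count S m" for c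
    by (rule of_nat_le_missed_block_count)
  moreover have "(of_nat c :: ennreal) \<le> of_nat (c*m)" for c
    using m by (intro of_nat_mono) simp
  ultimately have "of_nat c \<le> missed_block_count S m" for c
    by (blast intro: order_trans)
  then have "missed_block_count S m = \<top>"
    by (rule ennreal_eq_top_if_of_nat_le)
  then show ?thesis
    by simp
next
  case (Some x)
  have "0 < x"
    using Some unfolding kth_right_eq_Some_iff by simp
  have "nat x \<le> nat x * m"
    using m by simp
  then have "x \<le> int (nat x * m)"
    using \<open>0 < x\<close> by linarith
  define c where "c = (LEAST c. x \<le> int (c*m))"
  have x_le: "x \<le> int (c*m)"
    unfolding c_def by (rule LeastI) fact
  have "\<forall>q<c. \<exists>r<m. misses_block S q r"
  proof (intro allI impI)
    fix q assume "q < c"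
    then have "\<not> x \<le> int (q*m)"
      unfolding c_def by (rule not_less_Least)
    then show "\<exists>r<m. misses_block S q r"
      using kth_right_0_le_if_meets_blocks[OF m, of S q] Some by (metis option.inject)
  qed
  then have "of_nat (c*m) \<le> missed_block_count S m"
    by (rule of_nat_le_missed_block_count)
  moreover have "ennreal (real_of_int x) \<le> of_nat (c*m)"
    unfolding ennreal_of_nat_eq_real_of_nat using x_le
    by (intro ennreal_leI) (metis of_int_le_iff of_int_of_nat_eq)
  ultimately show ?thesis
    unfolding dist_kth_right_def Some using \<open>0 < x\<close> by simp
qed

lemma initial_gap_count_le_dist_kth_right:
  "(\<Sum>n. if misses_block S n 0 then 1 else 0) \<le> dist_kth_right S m"
proof (cases "kth_right S 0 m")
  case None
  then show ?thesis
    unfolding dist_kth_right_def by simp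
next
  case (Some x)
  then have x: "x \<in> S" "0 < x"
    unfolding kth_right_eq_Some_iff by auto
  have hit: "\<not> misses_block S n 0" if "nat x \<le> n" for n
  proof -
    have "nat x \<in> {0*n+1..0*n+n}" "int (nat x) \<in> S"
      using x that by auto
    then show ?thesis
      unfolding misses_block_def by blast
  qed
  have "(\<Sum>n. if misses_block S n 0 then 1 else 0 :: ennreal)
      = (\<Sum>n<nat x. if misses_block S n 0 then 1 else 0)"
    by (rule suminf_finite) (simp_all add: hit not_less)
  also have "\<dots> \<le> (\<Sum>n<nat x. 1)"
    by (intro sum_mono) simp
  also have "\<dots> = dist_kth_right S m"
    unfolding dist_kth_right_def Some using x by (simp add: ennreal_of_nat_eq_real_of_nat)
  finally show ?thesis .
qed

section \<open>The stubs at the origin\<close>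

lemma points_right_0:
  assumes "j \<le> D 0"
  shows "points_right D C j 0 \<longleftrightarrow> C j"
proof -
  have first: "first_nonneg (Gamma D j) = 0"
    unfolding first_nonneg_def Gamma_def by (rule Least_equality) (use assms in auto)
  have none_below: "{y \<in> Gamma D j. 0 \<le> y \<and> y < 0} = {}"
    by auto
  show ?thesis
    unfolding points_right_def Let_def first none_below by simp
qed

lemma stub_edge_length_0:
  "stub_edge_length D C j 0 =
     (if points_right D C j 0 then dist_kth_right (Gamma D j) (2*j - 1)
      else dist_kth_right (uminus ` Gamma D j) (2*j - 1))"
  unfolding stub_edge_length_def partner_def kth_left_eq_map_kth_right dist_kth_right_def
  by (auto split: option.split)

section \<open>Cylinder events\<close>

lemma CT_space_cylinder:
  fixes F :: "nat pmf" and J :: "int set" and I :: "nat set"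
    and X :: "int \<Rightarrow> nat set" and Y :: "nat \<Rightarrow> bool set"
  assumes J: "finite J" and I: "finite I"
  defines "E \<equiv> {\<omega>. (\<forall>i\<in>J. fst \<omega> i \<in> X i) \<and> (\<forall>i\<in>I. snd \<omega> i \<in> Y i)}"
  shows "E \<in> sets (CT_space F)"
    and "emeasure (CT_space F) E = (\<Prod>i\<in>J. emeasure (measure_pmf F) (X i)) *
                                   (\<Prod>i\<in>I. emeasure (measure_pmf (bernoulli_pmf (1/2))) (Y i))"
proof -
  interpret degrees: product_prob_space "\<lambda>_::int. measure_pmf F" "UNIV :: int set"
    by unfold_locales
  interpret coins: product_prob_space "\<lambda>_::nat. measure_pmf (bernoulli_pmf (1/2))" "UNIV :: nat set"
    by unfold_locales
  let ?M1 = "\<Pi>\<^sub>M i\<in>(UNIV::int set). measure_pmf F"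
  let ?M2 = "\<Pi>\<^sub>M i\<in>(UNIV::nat set). measure_pmf (bernoulli_pmf (1/2))"
  define A where "A = {x\<in>space ?M1. \<forall>i\<in>J. x i \<in> X i}"
  define B where "B = {x\<in>space ?M2. \<forall>i\<in>I. x i \<in> Y i}"
  have E: "E = A \<times> B"
    unfolding E_def A_def B_def by (auto simp: space_PiM)
  have A: "A \<in> sets ?M1"
    unfolding A_def by (rule sets.sets_Collect_finite_All[OF _ J]) auto
  have B: "B \<in> sets ?M2"
    unfolding B_def by (rule sets.sets_Collect_finite_All[OF _ I]) auto
  show "E \<in> sets (CT_space F)"
    unfolding E CT_space_def using A B by simp
  have "emeasure (CT_space F) E = emeasure ?M1 A * emeasure ?M2 B"
    unfolding E CT_space_def by (rule coins.P.emeasure_pair_measure_Times[OF A B])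
  also have "emeasure ?M1 A = (\<Prod>i\<in>J. emeasure (measure_pmf F) (X i))"
    unfolding A_def by (rule degrees.emeasure_PiM_Collect) (use J in auto)
  also have "emeasure ?M2 B = (\<Prod>i\<in>I. emeasure (measure_pmf (bernoulli_pmf (1/2))) (Y i))"
    unfolding B_def by (rule coins.emeasure_PiM_Collect) (use I in auto)
  finally show "emeasure (CT_space F) E = (\<Prod>i\<in>J. emeasure (measure_pmf F) (X i)) *
      (\<Prod>i\<in>I. emeasure (measure_pmf (bernoulli_pmf (1/2))) (Y i))" .
qed

lemma CT_space_degree_cylinder:
  fixes F :: "nat pmf" and J :: "int set" and X :: "int \<Rightarrow> nat set"
  assumes "finite J"
  shows "{\<omega>. \<forall>i\<in>J. fst \<omega> i \<in> X i} \<in> sets (CT_space F)"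
    and "emeasure (CT_space F) {\<omega>. \<forall>i\<in>J. fst \<omega> i \<in> X i} = (\<Prod>i\<in>J. emeasure (measure_pmf F) (X i))"
  using CT_space_cylinder[OF assms finite.emptyI, where F=F and X=X and Y="\<lambda>_. UNIV"] by simp_all

lemma AE_CT_space_degree_in_support: "AE \<omega> in CT_space F. fst \<omega> i \<in> set_pmf F"
proof (rule AE_I')
  let ?N = "{\<omega>. \<forall>i'\<in>{i}. fst \<omega> i' \<in> - set_pmf F}"
  show "?N \<in> null_sets (CT_space F)"
    using CT_space_degree_cylinder[where J="{i}" and F=F and X="\<lambda>_. - set_pmf F"]
    by (simp add: null_sets_def measure_pmf.emeasure_eq_measure measure_pmf_zero_iff)
  show "{\<omega> \<in> space (CT_space F). fst \<omega> i \<notin> set_pmf F} \<subseteq> ?N"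
    by auto
qed

definition block_event :: "nat \<Rightarrow> int \<Rightarrow> nat \<Rightarrow> nat \<Rightarrow> ((int \<Rightarrow> nat) \<times> (nat \<Rightarrow> bool)) set" where
  "block_event j s q r = {\<omega>. \<forall>k\<in>{r*q+1..r*q+q}. fst \<omega> (s * int k) < j}"

lemma block_event_cylinder:
  "block_event j s q r = {\<omega>. \<forall>i\<in>(\<lambda>k. s * int k) ` {r*q+1..r*q+q}. fst \<omega> i \<in> {..<j}}"
  unfolding block_event_def by auto

lemma block_event_sets [measurable]: "block_event j s q r \<in> sets (CT_space F)"
  unfolding block_event_cylinder by (rule CT_space_degree_cylinder) simp

lemma emeasure_block_event:
  assumes "s \<noteq> 0"
  shows "emeasure (CT_space F) (block_event j s q r) = emeasure (measure_pmf F) {..<j} ^ q"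
proof -
  have "inj_on (\<lambda>k. s * int k) {r*q+1..r*q+q}"
    using assms by (auto intro!: inj_onI)
  then show ?thesis
    unfolding block_event_cylinder by (subst CT_space_degree_cylinder(2)) (simp_all add: card_image)
qed

lemma indicator_block_event:
  "indicator (block_event j 1 q r) \<omega> = (if misses_block (Gamma (fst \<omega>) j) q r then 1 else 0)"
  "indicator (block_event j (-1) q r) \<omega> = (if misses_block (uminus ` Gamma (fst \<omega>) j) q r then 1 else 0)"
proof -
  have mirror: "int k \<in> uminus ` Gamma (fst \<omega>) j \<longleftrightarrow> - int k \<in> Gamma (fst \<omega>) j" for k
    by force
  show "indicator (block_event j 1 q r) \<omega> = (if misses_block (Gamma (fst \<omega>) j) q r then 1 else 0)"
    by (auto simp: block_event_def misses_block_def Gamma_def indicator_def not_le)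
  show "indicator (block_event j (-1) q r) \<omega> =
      (if misses_block (uminus ` Gamma (fst \<omega>) j) q r then 1 else 0)"
    unfolding block_event_def misses_block_def indicator_def mirror by (simp add: Gamma_def not_le)
qed

section \<open>Bounded degrees: finite expectation\<close>

definition block_bound :: "nat \<Rightarrow> int \<Rightarrow> (int \<Rightarrow> nat) \<times> (nat \<Rightarrow> bool) \<Rightarrow> ennreal" where
  "block_bound j s \<omega> = (\<Sum>q. of_nat (2*j - 1) * (\<Sum>r<2*j - 1. indicator (block_event j s q r) \<omega>))"

lemma borel_measurable_block_bound [measurable]:
  "block_bound j s \<in> borel_measurable (CT_space F)"
  unfolding block_bound_def by measurable

lemma stub_edge_length_0_le_block_bound:
  assumes "1 \<le> j"
  shows "stub_edge_length (fst \<omega>) (snd \<omega>) j 0 \<le> block_bound j 1 \<omega> + block_bound j (-1) \<omega>"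
proof -
  have "dist_kth_right (Gamma (fst \<omega>) j) (2*j - 1) \<le> block_bound j 1 \<omega>"
    using dist_kth_right_le_missed_block_count[of "2*j - 1"] assms
    unfolding block_bound_def missed_block_count_def indicator_block_event by simp
  moreover have "dist_kth_right (uminus ` Gamma (fst \<omega>) j) (2*j - 1) \<le> block_bound j (-1) \<omega>"
    using dist_kth_right_le_missed_block_count[of "2*j - 1"] assms
    unfolding block_bound_def missed_block_count_def indicator_block_event by simp
  ultimately show ?thesis
    unfolding stub_edge_length_0 by (auto intro: add_increasing add_increasing2)
qed

lemma nn_integral_block_bound_finite:
  assumes "s \<noteq> 0" and less_one: "measure_pmf.prob F {..<j} < 1"
  shows "(\<integral>\<^sup>+\<omega>. block_bound j s \<omega> \<partial>CT_space F) < \<infinity>"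
proof -
  let ?m = "real (2*j - 1)" and ?a = "measure_pmf.prob F {..<j}"
  have "(\<integral>\<^sup>+\<omega>. block_bound j s \<omega> \<partial>CT_space F)
      = (\<Sum>q. of_nat (2*j - 1) * (\<Sum>r<2*j - 1. emeasure (CT_space F) (block_event j s q r)))"
    unfolding block_bound_def
    by (simp add: nn_integral_suminf nn_integral_cmult nn_integral_sum)
  also have "\<dots> = (\<Sum>q. ennreal (?m * ?m * ?a ^ q))"
    using assms(1)
    by (simp add: emeasure_block_event measure_pmf.emeasure_eq_measure ennreal_of_nat_eq_real_of_nat
        ennreal_power ennreal_mult'' mult.assoc)
  also have "\<dots> = ennreal (?m * ?m * (1 / (1 - ?a)))"
    using less_one by (intro suminf_ennreal_eq sums_mult geometric_sums) auto
  finally show ?thesis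
    by simp
qed

lemma CT_T_le_block_bounds:
  assumes "fst \<omega> 0 \<le> K"
  shows "CT_T \<omega> \<le> (\<Sum>j\<in>{1..K}. block_bound j 1 \<omega> + block_bound j (-1) \<omega>)"
proof -
  have "CT_T \<omega> \<le> (\<Sum>j\<in>{1..K}. stub_edge_length (fst \<omega>) (snd \<omega>) j 0)"
    unfolding CT_T_def using assms by (intro sum_mono2) auto
  also have "\<dots> \<le> (\<Sum>j\<in>{1..K}. block_bound j 1 \<omega> + block_bound j (-1) \<omega>)"
    by (intro sum_mono stub_edge_length_0_le_block_bound) simp
  finally show ?thesis .
qed

lemma CT_T_nn_integral_finite:
  assumes "finite (set_pmf F)"
  shows "(\<integral>\<^sup>+\<omega>. CT_T \<omega> \<partial>CT_space F) < \<infinity>"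
proof -
  define K where "K = Max (set_pmf F)"
  have K: "K \<in> set_pmf F" "\<And>k. k \<in> set_pmf F \<Longrightarrow> k \<le> K"
    unfolding K_def using assms set_pmf_not_empty[of F] by (auto intro: Max_in)
  have "AE \<omega> in CT_space F. CT_T \<omega> \<le> (\<Sum>j\<in>{1..K}. block_bound j 1 \<omega> + block_bound j (-1) \<omega>)"
    using AE_CT_space_degree_in_support[of 0 F] by eventually_elim (use K(2) in \<open>blast intro: CT_T_le_block_bounds\<close>)
  then have "(\<integral>\<^sup>+\<omega>. CT_T \<omega> \<partial>CT_space F)
      \<le> (\<integral>\<^sup>+\<omega>. (\<Sum>j\<in>{1..K}. block_bound j 1 \<omega> + block_bound j (-1) \<omega>) \<partial>CT_space F)"
    by (rule nn_integral_mono_AE)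
  also have "\<dots> = (\<Sum>j\<in>{1..K}. (\<integral>\<^sup>+\<omega>. block_bound j 1 \<omega> \<partial>CT_space F) +
                               (\<integral>\<^sup>+\<omega>. block_bound j (-1) \<omega> \<partial>CT_space F))"
    by (simp add: nn_integral_sum nn_integral_add borel_measurable_block_bound)
  also have "\<dots> < \<infinity>"
  proof -
    have "measure_pmf.prob F {..<j} < 1" if "j \<le> K" for j
    proof -
      have "0 < measure_pmf.prob F {j..}"
        using K(1) that by (intro measure_pmf_posI) auto
      then show ?thesis
        using prob_atLeast_eq_1_minus_prob_lessThan[of F j] by simp
    qed
    then show ?thesis
      using nn_integral_block_bound_finite[of 1 F] nn_integral_block_bound_finite[of "-1" F]
      by (simp add: ennreal_add_less_top ennreal_sum_less_top)
  qed
  finally show ?thesis .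
qed

section \<open>Unbounded degrees: infinite expectation\<close>

definition gap_event :: "nat \<Rightarrow> nat \<Rightarrow> ((int \<Rightarrow> nat) \<times> (nat \<Rightarrow> bool)) set" where
  "gap_event j n = {\<omega>. j \<le> fst \<omega> 0 \<and> snd \<omega> j \<and> (\<forall>k\<in>{1..n}. fst \<omega> (int k) < j)}"

lemma gap_event_cylinder:
  "gap_event j n = {\<omega>. (\<forall>i\<in>insert 0 (int ` {1..n}). fst \<omega> i \<in> (if i = 0 then {j..} else {..<j})) \<and>
                        (\<forall>c\<in>{j}. snd \<omega> c \<in> {True})}"
  unfolding gap_event_def by auto

lemma gap_event_sets [measurable]: "gap_event j n \<in> sets (CT_space F)"
  unfolding gap_event_cylinder by (rule CT_space_cylinder) simp_all

lemma emeasure_gap_event: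
  "emeasure (CT_space F) (gap_event j n) =
     ennreal (measure_pmf.prob F {j..} * measure_pmf.prob F {..<j} ^ n) / 2"
proof -
  have "(\<Prod>i\<in>int ` {1..n}. emeasure (measure_pmf F) (if i = 0 then {j..} else {..<j}))
      = (\<Prod>i\<in>int ` {1..n}. emeasure (measure_pmf F) {..<j})"
    by (rule prod.cong) auto
  then have "(\<Prod>i\<in>insert 0 (int ` {1..n}). emeasure (measure_pmf F) (if i = 0 then {j..} else {..<j}))
      = emeasure (measure_pmf F) {j..} * emeasure (measure_pmf F) {..<j} ^ n"
    by (subst prod.insert) (auto simp: card_image)
  then have "emeasure (CT_space F) (gap_event j n) =
      emeasure (measure_pmf F) {j..} * emeasure (measure_pmf F) {..<j} ^ n *
      emeasure (measure_pmf (bernoulli_pmf (1/2))) {True}"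
    unfolding gap_event_cylinder by (subst CT_space_cylinder(2)) simp_all
  also have "\<dots> = ennreal (measure_pmf.prob F {j..} * measure_pmf.prob F {..<j} ^ n) * ennreal (1/2)"
    by (simp add: measure_pmf.emeasure_eq_measure measure_pmf_single ennreal_power ennreal_mult'')
  also have "\<dots> = ennreal (measure_pmf.prob F {j..} * measure_pmf.prob F {..<j} ^ n) / 2"
    by (simp only: ennreal_half ennreal_times_divide mult_1_right)
  finally show ?thesis .
qed

lemma gap_count_le_stub_edge_length_0:
  "(\<Sum>n. indicator (gap_event j n) \<omega>)
     \<le> (if j \<le> fst \<omega> 0 then stub_edge_length (fst \<omega>) (snd \<omega>) j 0 else 0)"
proof (cases "j \<le> fst \<omega> 0 \<and> snd \<omega> j")
  case True
  then have "indicator (gap_event j n) \<omega> = (if misses_block (Gamma (fst \<omega>) j) n 0 then 1 else 0 :: ennreal)" for n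
    by (simp add: gap_event_def misses_block_def Gamma_def indicator_def not_le)
  then show ?thesis
    using initial_gap_count_le_dist_kth_right[of "Gamma (fst \<omega>) j" "2*j - 1"] True
    by (simp add: stub_edge_length_0 points_right_0)
next
  case False
  then have "indicator (gap_event j n) \<omega> = (0::ennreal)" for n
    by (auto simp: gap_event_def)
  then show ?thesis
    by simp
qed

lemma nn_integral_gap_count:
  assumes pos: "0 < measure_pmf.prob F {j..}"
  shows "(\<integral>\<^sup>+\<omega>. (\<Sum>n. indicator (gap_event j n) \<omega>) \<partial>CT_space F) = 1/2"
proof -
  let ?p = "measure_pmf.prob F {j..}" and ?a = "measure_pmf.prob F {..<j}"
  have "?p = 1 - ?a"
    by (rule prob_atLeast_eq_1_minus_prob_lessThan)
  have "(\<integral>\<^sup>+\<omega>. (\<Sum>n. indicator (gap_event j n) \<omega>) \<partial>CT_space F) = (\<Sum>n. ennreal (?p * ?a ^ n)) / 2"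
    by (simp add: nn_integral_suminf emeasure_gap_event)
  also have "(\<Sum>n. ennreal (?p * ?a ^ n)) = ennreal (?p * (1 / (1 - ?a)))"
    using pos \<open>?p = 1 - ?a\<close> by (intro suminf_ennreal_eq sums_mult geometric_sums) auto
  also have "\<dots> = 1"
    using pos \<open>?p = 1 - ?a\<close> by simp
  finally show ?thesis .
qed

lemma gap_counts_le_CT_T:
  "(\<Sum>j\<in>{1..J}. \<Sum>n. indicator (gap_event j n) \<omega>) \<le> CT_T \<omega>"
proof -
  have "(\<Sum>j\<in>{1..J}. \<Sum>n. indicator (gap_event j n) \<omega>)
      \<le> (\<Sum>j\<in>{1..J}. if j \<le> fst \<omega> 0 then stub_edge_length (fst \<omega>) (snd \<omega>) j 0 else 0)"
    by (intro sum_mono gap_count_le_stub_edge_length_0)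
  also have "\<dots> = (\<Sum>j\<in>{j\<in>{1..J}. j \<le> fst \<omega> 0}. stub_edge_length (fst \<omega>) (snd \<omega>) j 0)"
    by (rule sum.inter_filter[symmetric]) simp
  also have "\<dots> \<le> CT_T \<omega>"
    unfolding CT_T_def by (intro sum_mono2) auto
  finally show ?thesis .
qed

lemma CT_T_nn_integral_infinite:
  assumes "infinite (set_pmf F)"
  shows "(\<integral>\<^sup>+\<omega>. CT_T \<omega> \<partial>CT_space F) = \<infinity>"
proof -
  have pos: "0 < measure_pmf.prob F {j..}" for j
  proof -
    obtain k where "k \<in> set_pmf F" "j \<le> k"
      using assms unfolding infinite_nat_iff_unbounded_le by blast
    then show ?thesis
      by (intro measure_pmf_posI) auto
  qed
  have "of_nat J / 2 \<le> (\<integral>\<^sup>+\<omega>. CT_T \<omega> \<partial>CT_space F)" for J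
  proof -
    have "of_nat J / 2 = (\<Sum>j\<in>{1..J}. \<integral>\<^sup>+\<omega>. (\<Sum>n. indicator (gap_event j n) \<omega>) \<partial>CT_space F)"
      using pos by (simp add: nn_integral_gap_count ennreal_times_divide)
    also have "\<dots> = (\<integral>\<^sup>+\<omega>. (\<Sum>j\<in>{1..J}. \<Sum>n. indicator (gap_event j n) \<omega>) \<partial>CT_space F)"
      by (rule nn_integral_sum[symmetric]) measurable
    also have "\<dots> \<le> (\<integral>\<^sup>+\<omega>. CT_T \<omega> \<partial>CT_space F)"
      by (intro nn_integral_mono gap_counts_le_CT_T)
    finally show ?thesis .
  qed
  moreover have "(of_nat n :: ennreal) = of_nat (2*n) / 2" for n
    by (simp add: mult.commute[of 2] ennreal_mult_divide_eq)
  ultimately have "of_nat n \<le> (\<integral>\<^sup>+\<omega>. CT_T \<omega> \<partial>CT_space F)" for n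
    by metis
  then show ?thesis
    using ennreal_eq_top_if_of_nat_le by simp
qed

theorem corollary2p2:
  fixes F :: "nat pmf"
  shows "(\<integral>\<^sup>+ \<omega>. CT_T \<omega> \<partial>CT_space F) < \<infinity> \<longleftrightarrow> (\<exists>K::nat. set_pmf F \<subseteq> {..K})"
proof (cases "finite (set_pmf F)")
  case True
  then show ?thesis
    using CT_T_nn_integral_finite[OF True] by (simp add: finite_nat_iff_bounded_le[symmetric])
next
  case False
  then show ?thesis
    using CT_T_nn_integral_infinite[OF False] by (simp add: finite_nat_iff_bounded_le[symmetric])
qed

end
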